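(* Let $A$ be a nontrivial commutative ring. The following conditions are equivalent: (a) $A$ is sublocalizable. (b) $1 + A^\times \subseteq A^\times \cup J(A)$. (c) $A^\times \cup J(A)$ is a subring of $A$. (d) There exists a proper ideal $I$ of $A$ such that $A^\times \cup I$ is a subring of $A$. (e) $J(A)$ is the unique proper ideal $I$ of $A$ such that $A^\times \cup I$ is a subring of $A$. (f) $B\setminus A^\times$ is an ideal of $A$ for some subring $B$ of $A$ containing $A^\times$ (in which case $B = A^\times \cup J(A)$ and $B\setminus A^\times = J(A)$ are unique). (g) $A^\times \cup J(A)$ is a local subring of $A$ (with maximal ideal $J(A)$ and having the same units as $A$). (h) $A$ has a (unique) local subring with maximal ideal $J(A)$ and having the same units as $A$. (i) $A$ has a (unique) local subring whose maximal ideal is also an ideal of $A$ and whose units are the same as those of $A$. (j) $A$ has a (unique) local subring $B$ with $B^\times = A^\times$ and $J(B) = J(A)$. (k) $A/J(A)$ is sublocalizable. (l) $A/J(A)$ is unit-additive.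
   Context: $A^\times$ is the unit group and $J(A)$ the Jacobson radical of $A$; $1+A^\times=\{1+u\mid u\in A^\times\}$ and $A^\times+A^\times=\{u+v\mid u,v\in A^\times\}$. A commutative ring $A$ is sublocalizable if it is nontrivial and $A^\times+A^\times\subseteq A^\times\cup J(A)$. A commutative ring is unit-additive if for all units $u,v$, $u+v$ is a unit or nilpotent. *)

theory Defs
  imports "HOL-Algebra.Algebra"
begin

definition jacobson :: "('a, 'b) ring_scheme \<Rightarrow> 'a set" where
  "jacobson R = carrier R \<inter> \<Inter> {M. maximalideal M R}"

definition local_ring :: "('a, 'b) ring_scheme \<Rightarrow> bool" where
  "local_ring R \<longleftrightarrow> cring R \<and> \<one>\<^bsub>R\<^esub> \<noteq> \<zero>\<^bsub>R\<^esub> \<and> (\<exists>!M. maximalideal M R)"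

definition sublocalizable :: "('a, 'b) ring_scheme \<Rightarrow> bool" where
  "sublocalizable R \<longleftrightarrow> \<one>\<^bsub>R\<^esub> \<noteq> \<zero>\<^bsub>R\<^esub> \<and>
     (\<forall>u \<in> Units R. \<forall>v \<in> Units R. u \<oplus>\<^bsub>R\<^esub> v \<in> Units R \<union> jacobson R)"

definition unit_additive :: "('a, 'b) ring_scheme \<Rightarrow> bool" where
  "unit_additive R \<longleftrightarrow>
     (\<forall>u \<in> Units R. \<forall>v \<in> Units R. u \<oplus>\<^bsub>R\<^esub> v \<in> Units R \<or>
        (\<exists>n::nat. (u \<oplus>\<^bsub>R\<^esub> v) [^]\<^bsub>R\<^esub> n = \<zero>\<^bsub>R\<^esub>))"

end

theory Submission
  imports Defs
begin

text \<open>
  Write U for the units of A and J for its Jacobson radical. The key fact is that x \<in> J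
  iff 1 + rx is a unit for all r. Hence u + j is a unit for u \<in> U and j \<in> J, so U \<union> J is
  closed under addition exactly when sums of units lie in U \<union> J; it is then a local ring
  with maximal ideal J and unit group U. Conversely, if B \<supseteq> U is a subring and B - U is an
  ideal of A, then B - U \<subseteq> J, since a nonunit 1 + rx would lie in B - U together with rx
  and force 1 into that ideal, and J \<subseteq> B - U because x = (1 + x) - 1. So every subring
  in (c)-(j) is forced to be U \<union> J, and each of these conditions becomes
  "B = U \<union> J and A is sublocalizable".
  For (k) and (l): units and the Jacobson radical lift along A \<rightarrow> A/I whenever I \<subseteq> J,
  and J is a radical ideal, so nilpotence in A/J means membership in J.
\<close>

lemma (in ideal) Units_disjoint:
  assumes "I \<noteq> carrier R"
  shows "I \<inter> Units R = {}"
proof (rule ccontr)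
  assume "I \<inter> Units R \<noteq> {}"
  then obtain u where u: "u \<in> I" "u \<in> Units R" by blast
  then have "inv u \<otimes> u \<in> I" using I_l_closed by blast
  then have "\<one> \<in> I" using u(2) by (metis Units_l_inv)
  then show False using one_imp_carrier assms by blast
qed

lemma (in primeideal) nat_pow_mem_imp_mem:
  assumes "x \<in> carrier R" "x [^] (n::nat) \<in> I"
  shows "x \<in> I"
  using assms(2)
proof (induction n)
  case 0
  then show ?case using one_imp_carrier I_notcarr by simp
next
  case (Suc n)
  then show ?case using I_prime[OF nat_pow_closed[OF assms(1)] assms(1)] by auto
qed

context cring
begin

lemma exists_maximalideal_superset:
  assumes I: "ideal I R" and one: "\<one> \<notin> I"
  shows "\<exists>M. maximalideal M R \<and> I \<subseteq> M"
proof -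
  define proper_ext where "proper_ext = {K. ideal K R \<and> I \<subseteq> K \<and> \<one> \<notin> K}"
  have "\<exists>M\<in>proper_ext. \<forall>K\<in>proper_ext. M \<subseteq> K \<longrightarrow> K = M"
  proof (rule subset_Zorn)
    fix C assume C: "subset.chain proper_ext C"
    show "\<exists>U\<in>proper_ext. \<forall>K\<in>C. K \<subseteq> U"
    proof (cases "C = {}")
      case True
      then show ?thesis using I one proper_ext_def by auto
    next
      case False
      have "subset.chain {K. ideal K R} C"
        using C unfolding pred_on.chain_def proper_ext_def by auto
      from chain_Union_is_ideal[OF this] have "ideal (\<Union>C) R" using False by simp
      moreover have "C \<subseteq> proper_ext" using C unfolding pred_on.chain_def by blast
      then have "I \<subseteq> \<Union>C" "\<one> \<notin> \<Union>C" using False unfolding proper_ext_def by auto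
      ultimately show ?thesis unfolding proper_ext_def by auto
    qed
  qed
  then obtain M where M: "M \<in> proper_ext" and max: "\<And>K. K \<in> proper_ext \<Longrightarrow> M \<subseteq> K \<Longrightarrow> K = M"
    by blast
  have "maximalideal M R"
  proof (rule maximalidealI)
    show "ideal M R" "carrier R \<noteq> M" using M proper_ext_def by auto
    fix K assume K: "ideal K R" "M \<subseteq> K" "K \<subseteq> carrier R"
    show "K = M \<or> K = carrier R"
      using ideal.one_imp_carrier[OF K(1)] max[of K] K M proper_ext_def by auto
  qed
  then show ?thesis using M proper_ext_def by auto
qed

lemma nonunit_in_maximalideal:
  assumes x: "x \<in> carrier R" "x \<notin> Units R"
  shows "\<exists>M. maximalideal M R \<and> x \<in> M"
proof -
  have "\<one> \<notin> PIdl x"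
  proof
    assume "\<one> \<in> PIdl x"
    then obtain y where "y \<in> carrier R" "\<one> = y \<otimes> x" unfolding cgenideal_def by auto
    then have "x \<in> Units R" using x m_comm[of x y] unfolding Units_def by auto
    then show False using x by auto
  qed
  then obtain M where "maximalideal M R" "PIdl x \<subseteq> M"
    using exists_maximalideal_superset cgenideal_ideal[OF x(1)] by blast
  then show ?thesis using cgenideal_self[OF x(1)] by auto
qed

lemma maximalideal_complement_coprime:
  assumes M: "maximalideal M R" and a: "a \<in> carrier R" "a \<notin> M"
  shows "\<exists>r\<in>carrier R. \<exists>i\<in>M. \<one> = r \<otimes> a \<oplus> i"
proof -
  interpret maximalideal M R by fact
  define K where "K = PIdl a <+>\<^bsub>R\<^esub> M"
  have K: "ideal K R" unfolding K_def by (simp add: a add_ideals cgenideal_ideal is_ideal)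
  have MK: "M \<subseteq> K" and aK: "a \<in> K"
  proof -
    have zero: "\<zero> \<in> PIdl a" "\<zero> \<in> M"
      using cgenideal_ideal[OF a(1)] is_ideal by (simp_all add: additive_subgroup.zero_closed ideal.axioms(1))
    show "M \<subseteq> K"
    proof
      fix m assume m: "m \<in> M"
      then have "m = \<zero> \<oplus> m" using Icarr by simp
      then show "m \<in> K" unfolding K_def set_add_def' using zero(1) m by blast
    qed
    have "a = a \<oplus> \<zero>" using a by simp
    then show "a \<in> K" unfolding K_def set_add_def' using zero(2) cgenideal_self[OF a(1)] by blast
  qed
  have "K \<subseteq> carrier R" using ideal.Icarr[OF K] by blast
  then have "K = carrier R"
    using I_maximal[OF K MK] aK a(2) by blast
  then have "\<one> \<in> PIdl a <+>\<^bsub>R\<^esub> M" unfolding K_def by simp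
  then obtain h i where "h \<in> PIdl a" "i \<in> M" "\<one> = h \<oplus> i"
    unfolding set_add_def' by blast
  then show ?thesis unfolding cgenideal_def by blast
qed

lemma jacobson_iff:
  "x \<in> jacobson R \<longleftrightarrow> x \<in> carrier R \<and> (\<forall>r\<in>carrier R. \<one> \<oplus> r \<otimes> x \<in> Units R)"
proof
  assume x: "x \<in> jacobson R"
  then have xc: "x \<in> carrier R" unfolding jacobson_def by blast
  have "\<one> \<oplus> r \<otimes> x \<in> Units R" if r: "r \<in> carrier R" for r
  proof (rule ccontr)
    assume "\<one> \<oplus> r \<otimes> x \<notin> Units R"
    then obtain M where M: "maximalideal M R" "\<one> \<oplus> r \<otimes> x \<in> M"
      using nonunit_in_maximalideal[of "\<one> \<oplus> r \<otimes> x"] r xc by auto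
    interpret maximalideal M R by fact
    have "x \<in> M" using x M(1) unfolding jacobson_def by blast
    then have "r \<otimes> x \<in> M" using r by (rule I_l_closed)
    then have "(\<one> \<oplus> r \<otimes> x) \<ominus> r \<otimes> x \<in> M"
      using M(2) by (simp add: a_minus_def a_inv_closed a_closed)
    moreover have "(\<one> \<oplus> r \<otimes> x) \<ominus> r \<otimes> x = \<one>" using r xc by algebra
    ultimately have "\<one> \<in> M" by simp
    then show False using one_imp_carrier I_notcarr by auto
  qed
  then show "x \<in> carrier R \<and> (\<forall>r\<in>carrier R. \<one> \<oplus> r \<otimes> x \<in> Units R)" using xc by blast
next
  assume "x \<in> carrier R \<and> (\<forall>r\<in>carrier R. \<one> \<oplus> r \<otimes> x \<in> Units R)"
  then have xc: "x \<in> carrier R" and units: "\<And>r. r \<in> carrier R \<Longrightarrow> \<one> \<oplus> r \<otimes> x \<in> Units R"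
    by auto
  have "x \<in> M" if M: "maximalideal M R" for M
  proof (rule ccontr)
    assume "x \<notin> M"
    then obtain r i where ri: "r \<in> carrier R" "i \<in> M" "\<one> = r \<otimes> x \<oplus> i"
      using maximalideal_complement_coprime[OF M xc] by blast
    interpret maximalideal M R by fact
    have "i = \<one> \<oplus> (\<ominus> r) \<otimes> x" using ri xc Icarr[OF ri(2)] by algebra
    then have "i \<in> Units R" using units ri(1) by simp
    moreover have "M \<inter> Units R = {}" using Units_disjoint I_notcarr by simp
    ultimately show False using ri(2) by blast
  qed
  then show "x \<in> jacobson R" unfolding jacobson_def using xc by blast
qed

lemma jacobson_ideal: "ideal (jacobson R) R"
proof (cases "{M. maximalideal M R} = {}")
  case True
  then show ?thesis unfolding jacobson_def using oneideal by simp
next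
  case False
  then have "jacobson R = \<Inter>{M. maximalideal M R}"
    unfolding jacobson_def using maximalideal.axioms(1) ideal.Icarr by fastforce
  then show ?thesis using i_Intersect[OF _ False] maximalideal.axioms(1) by auto
qed

lemma jacobson_disjoint_Units:
  assumes "\<one> \<noteq> \<zero>"
  shows "jacobson R \<inter> Units R = {}"
proof -
  obtain M where M: "maximalideal M R"
    using exists_maximalideal_superset[OF zeroideal] assms by blast
  then have "jacobson R \<subseteq> M" unfolding jacobson_def by blast
  then show ?thesis
    using ideal.Units_disjoint[OF maximalideal.axioms(1)[OF M]] maximalideal.I_notcarr[OF M] by blast
qed

lemma Units_add_jacobson:
  assumes u: "u \<in> Units R" and j: "j \<in> jacobson R"
  shows "u \<oplus> j \<in> Units R"
proof -
  have uc: "u \<in> carrier R" "inv u \<in> carrier R" and jc: "j \<in> carrier R"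
    using u j jacobson_iff by auto
  have "u \<otimes> (\<one> \<oplus> inv u \<otimes> j) \<in> Units R" using u j jacobson_iff uc by simp
  moreover have "u \<otimes> (\<one> \<oplus> inv u \<otimes> j) = u \<oplus> j"
    using uc jc by (simp add: r_distr m_assoc[symmetric] Units_r_inv[OF u])
  ultimately show ?thesis by simp
qed

lemma nat_pow_mem_jacobson_imp_mem:
  assumes "x \<in> carrier R" "x [^] (n::nat) \<in> jacobson R"
  shows "x \<in> jacobson R"
  using assms primeideal.nat_pow_mem_imp_mem[OF maximalideal_prime]
  unfolding jacobson_def by blast

lemma maximalideal_subset_nonunits:
  assumes "maximalideal M R"
  shows "M \<subseteq> carrier R - Units R"
  using ideal.Units_disjoint[OF maximalideal.axioms(1)[OF assms]] maximalideal.I_notcarr[OF assms]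
    ideal.Icarr[OF maximalideal.axioms(1)[OF assms]] by blast

lemma nonunits_ideal_maximalideal_iff:
  assumes N: "ideal (carrier R - Units R) R"
  shows "maximalideal M R \<longleftrightarrow> M = carrier R - Units R"
proof
  assume M: "maximalideal M R"
  have "carrier R - Units R \<noteq> carrier R" by blast
  then show "M = carrier R - Units R"
    using maximalideal.I_maximal[OF M N maximalideal_subset_nonunits[OF M]] by blast
next
  assume M: "M = carrier R - Units R"
  show "maximalideal M R"
  proof (rule maximalidealI)
    show "ideal M R" "carrier R \<noteq> M" using N M by auto
    fix K assume K: "ideal K R" "M \<subseteq> K" "K \<subseteq> carrier R"
    show "K = M \<or> K = carrier R"
    proof (cases "K = carrier R")
      case False
      then show ?thesis using ideal.Units_disjoint[OF K(1)] K(2,3) M by blast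
    qed simp
  qed
qed

lemma local_ring_iff_nonunits_ideal:
  "local_ring R \<longleftrightarrow> \<one> \<noteq> \<zero> \<and> ideal (carrier R - Units R) R"
proof
  assume L: "local_ring R"
  then have nt: "\<one> \<noteq> \<zero>" unfolding local_ring_def by blast
  obtain M where M: "maximalideal M R" and uniq: "\<And>M'. maximalideal M' R \<Longrightarrow> M' = M"
    using L unfolding local_ring_def by blast
  have "carrier R - Units R \<subseteq> M"
    using nonunit_in_maximalideal uniq by blast
  then have "M = carrier R - Units R" using maximalideal_subset_nonunits[OF M] by blast
  then show "\<one> \<noteq> \<zero> \<and> ideal (carrier R - Units R) R"
    using nt maximalideal.axioms(1)[OF M] by simp
next
  assume "\<one> \<noteq> \<zero> \<and> ideal (carrier R - Units R) R"
  then show "local_ring R"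
    unfolding local_ring_def using is_cring nonunits_ideal_maximalideal_iff by auto
qed

lemma local_ring_maximalideal_iff:
  assumes "local_ring R"
  shows "maximalideal M R \<longleftrightarrow> M = carrier R - Units R"
  using assms nonunits_ideal_maximalideal_iff local_ring_iff_nonunits_ideal by blast

lemma local_ring_jacobson:
  assumes "local_ring R"
  shows "jacobson R = carrier R - Units R"
  using local_ring_maximalideal_iff[OF assms] unfolding jacobson_def by auto

lemma subring_cring:
  assumes "subring B R"
  shows "cring (R\<lparr>carrier := B\<rparr>)"
  using subcring_iff[OF subringE(1)[OF assms]] subcringI'[OF assms] by blast

lemma subring_ideal:
  assumes B: "subring B R" and I: "ideal I R" and IB: "I \<subseteq> B"
  shows "ideal I (R\<lparr>carrier := B\<rparr>)"
proof -
  interpret S: cring "R\<lparr>carrier := B\<rparr>" using subring_cring[OF B] .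
  have "ring_hom_ring (R\<lparr>carrier := B\<rparr>) R id"
    using subringE(1)[OF B] by (intro ring_hom_ringI2 ring_hom_memI) (auto simp: S.ring_axioms ring_axioms)
  from ring_hom_ring.ideal_vimage[OF this I] show ?thesis
    using IB by (simp add: Int_absorb1 Collect_conj_eq)
qed

lemma subring_Units_eq:
  assumes B: "subring B R" and UB: "Units R \<subseteq> B"
  shows "Units (R\<lparr>carrier := B\<rparr>) = Units R"
proof
  show "Units (R\<lparr>carrier := B\<rparr>) \<subseteq> Units R"
    using subringE(1)[OF B] unfolding Units_def by auto
  show "Units R \<subseteq> Units (R\<lparr>carrier := B\<rparr>)"
  proof
    fix u assume u: "u \<in> Units R"
    then have "u \<in> B" "inv u \<in> B" using UB by auto
    then show "u \<in> Units (R\<lparr>carrier := B\<rparr>)"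
      using Units_l_inv[OF u] Units_r_inv[OF u] unfolding Units_def by auto
  qed
qed

lemma subring_nonunits_ideal_eq_jacobson:
  assumes nt: "\<one> \<noteq> \<zero>" and B: "subring B R" and UB: "Units R \<subseteq> B"
    and N: "ideal (B - Units R) R"
  shows "B - Units R = jacobson R" and "B = Units R \<union> jacobson R"
proof -
  interpret N: ideal "B - Units R" R by fact
  have "x \<in> jacobson R" if x: "x \<in> B - Units R" for x
  proof -
    have xc: "x \<in> carrier R" using x N.Icarr by blast
    have "\<one> \<oplus> r \<otimes> x \<in> Units R" if r: "r \<in> carrier R" for r
    proof (rule ccontr)
      assume "\<one> \<oplus> r \<otimes> x \<notin> Units R"
      moreover have rx: "r \<otimes> x \<in> B - Units R" using N.I_l_closed[OF x r] .
      ultimately have "\<one> \<oplus> r \<otimes> x \<in> B - Units R" using subringE(3,7)[OF B] by blast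
      then have "(\<one> \<oplus> r \<otimes> x) \<oplus> \<ominus> (r \<otimes> x) \<in> B - Units R"
        using N.a_closed N.a_inv_closed rx by blast
      moreover have "(\<one> \<oplus> r \<otimes> x) \<oplus> \<ominus> (r \<otimes> x) = \<one>" using r xc by algebra
      ultimately show False by simp
    qed
    then show ?thesis using jacobson_iff xc by blast
  qed
  moreover have "x \<in> B - Units R" if x: "x \<in> jacobson R" for x
  proof -
    have xc: "x \<in> carrier R" using x jacobson_iff by blast
    have "\<one> \<oplus> x \<in> B" using UB Units_add_jacobson[OF Units_one_closed x] by blast
    then have "(\<one> \<oplus> x) \<oplus> \<ominus> \<one> \<in> B" using subringE(3,5,7)[OF B] by blast
    moreover have "(\<one> \<oplus> x) \<oplus> \<ominus> \<one> = x" using xc by algebra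
    ultimately show ?thesis using jacobson_disjoint_Units[OF nt] x by auto
  qed
  ultimately show "B - Units R = jacobson R" by blast
  then show "B = Units R \<union> jacobson R" using UB by blast
qed

lemma sublocalizable_iff_one_add_Units:
  assumes nt: "\<one> \<noteq> \<zero>"
  shows "(\<forall>u \<in> Units R. \<one> \<oplus> u \<in> Units R \<union> jacobson R) \<longleftrightarrow> sublocalizable R"
proof
  assume one_add: "\<forall>u \<in> Units R. \<one> \<oplus> u \<in> Units R \<union> jacobson R"
  have "u \<oplus> v \<in> Units R \<union> jacobson R" if u: "u \<in> Units R" and v: "v \<in> Units R" for u v
  proof -
    have uc: "u \<in> carrier R" "inv u \<in> carrier R" and vc: "v \<in> carrier R" using u v by auto
    have w: "\<one> \<oplus> inv u \<otimes> v \<in> Units R \<union> jacobson R" using one_add u v by blast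
    have "u \<oplus> v = u \<otimes> (\<one> \<oplus> inv u \<otimes> v)"
      using uc vc by (simp add: r_distr m_assoc[symmetric] Units_r_inv[OF u])
    also have "\<dots> \<in> Units R \<union> jacobson R"
      using w u ideal.I_l_closed[OF jacobson_ideal] uc by auto
    finally show ?thesis .
  qed
  then show "sublocalizable R" unfolding sublocalizable_def using nt by blast
next
  assume "sublocalizable R"
  then show "\<forall>u \<in> Units R. \<one> \<oplus> u \<in> Units R \<union> jacobson R"
    unfolding sublocalizable_def by blast
qed

lemma sublocalizable_imp_subring:
  assumes "sublocalizable R"
  shows "subring (Units R \<union> jacobson R) R"
proof -
  interpret J: ideal "jacobson R" R by (rule jacobson_ideal)
  have units_add: "u \<oplus> v \<in> Units R \<union> jacobson R" if "u \<in> Units R" "v \<in> Units R" for u v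
    using assms that unfolding sublocalizable_def by blast
  show ?thesis
  proof (rule subringI)
    show "Units R \<union> jacobson R \<subseteq> carrier R" using J.a_subset by blast
    show "\<one> \<in> Units R \<union> jacobson R" by simp
  next
    fix x assume x: "x \<in> Units R \<union> jacobson R"
    have "\<ominus> x = \<ominus> \<one> \<otimes> x" if "x \<in> Units R"
      using l_minus[OF one_closed Units_closed[OF that]] Units_closed[OF that] by simp
    then show "\<ominus> x \<in> Units R \<union> jacobson R" using x J.a_inv_closed Units_minus_one_closed by auto
  next
    fix x y assume x: "x \<in> Units R \<union> jacobson R" and y: "y \<in> Units R \<union> jacobson R"
    then have c: "x \<in> carrier R" "y \<in> carrier R" using J.a_subset by auto
    show "x \<otimes> y \<in> Units R \<union> jacobson R"
      using x y c J.I_l_closed J.I_r_closed by auto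
    show "x \<oplus> y \<in> Units R \<union> jacobson R"
      using x y units_add Units_add_jacobson[of x y] Units_add_jacobson[of y x] a_comm[OF c] J.a_closed
      by auto
  qed
qed

lemma sublocalizable_iff_subring:
  assumes "\<one> \<noteq> \<zero>"
  shows "subring (Units R \<union> jacobson R) R \<longleftrightarrow> sublocalizable R"
proof
  assume "subring (Units R \<union> jacobson R) R"
  from subringE(7)[OF this] show "sublocalizable R"
    using assms unfolding sublocalizable_def by blast
qed (rule sublocalizable_imp_subring)

lemma sublocalizable_local_subring:
  assumes "sublocalizable R"
  defines "S \<equiv> R\<lparr>carrier := Units R \<union> jacobson R\<rparr>"
  shows "local_ring S" and "maximalideal (jacobson R) S"
    and "Units S = Units R" and "jacobson S = jacobson R"
proof -
  have nt: "\<one> \<noteq> \<zero>" using assms(1) unfolding sublocalizable_def by blast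
  have B: "subring (Units R \<union> jacobson R) R" using sublocalizable_imp_subring[OF assms(1)] .
  interpret S: cring S unfolding S_def using subring_cring[OF B] .
  show units: "Units S = Units R" unfolding S_def using subring_Units_eq[OF B] by blast
  have nonunits: "carrier S - Units S = jacobson R"
    using units jacobson_disjoint_Units[OF nt] unfolding S_def by auto
  have "ideal (jacobson R) S" unfolding S_def using subring_ideal[OF B jacobson_ideal] by blast
  then show local: "local_ring S"
    using S.local_ring_iff_nonunits_ideal nonunits nt unfolding S_def by simp
  show "maximalideal (jacobson R) S" using S.local_ring_maximalideal_iff[OF local] nonunits by simp
  show "jacobson S = jacobson R" using S.local_ring_jacobson[OF local] nonunits by simp
qed

lemma local_subring_same_Units:
  assumes B: "subring B R" and L: "local_ring (R\<lparr>carrier := B\<rparr>)"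
    and U: "Units (R\<lparr>carrier := B\<rparr>) = Units R"
  shows "Units R \<subseteq> B"
    and "maximalideal M (R\<lparr>carrier := B\<rparr>) \<longleftrightarrow> M = B - Units R"
    and "jacobson (R\<lparr>carrier := B\<rparr>) = B - Units R"
proof -
  interpret S: cring "R\<lparr>carrier := B\<rparr>" using subring_cring[OF B] .
  show "Units R \<subseteq> B" using U[symmetric] unfolding Units_def by auto
  show "maximalideal M (R\<lparr>carrier := B\<rparr>) \<longleftrightarrow> M = B - Units R"
    using S.local_ring_maximalideal_iff[OF L] U by simp
  show "jacobson (R\<lparr>carrier := B\<rparr>) = B - Units R"
    using S.local_ring_jacobson[OF L] U by simp
qed

lemma proper_ideal_Units_union_subring_iff:
  assumes nt: "\<one> \<noteq> \<zero>"
  shows "ideal I R \<and> I \<noteq> carrier R \<and> subring (Units R \<union> I) R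
    \<longleftrightarrow> I = jacobson R \<and> sublocalizable R"
proof
  assume I: "ideal I R \<and> I \<noteq> carrier R \<and> subring (Units R \<union> I) R"
  then have "(Units R \<union> I) - Units R = I" using ideal.Units_disjoint by blast
  then have "I = jacobson R" using subring_nonunits_ideal_eq_jacobson(1)[OF nt] I by fastforce
  then show "I = jacobson R \<and> sublocalizable R" using I sublocalizable_iff_subring[OF nt] by blast
next
  assume "I = jacobson R \<and> sublocalizable R"
  then show "ideal I R \<and> I \<noteq> carrier R \<and> subring (Units R \<union> I) R"
    using jacobson_ideal jacobson_disjoint_Units[OF nt] sublocalizable_imp_subring by blast
qed

lemma subring_nonunits_ideal_iff:
  assumes nt: "\<one> \<noteq> \<zero>"
  shows "subring B R \<and> Units R \<subseteq> B \<and> ideal (B - Units R) R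
    \<longleftrightarrow> B = Units R \<union> jacobson R \<and> sublocalizable R"
proof
  assume "subring B R \<and> Units R \<subseteq> B \<and> ideal (B - Units R) R"
  then show "B = Units R \<union> jacobson R \<and> sublocalizable R"
    using subring_nonunits_ideal_eq_jacobson(2)[OF nt] sublocalizable_iff_subring[OF nt] by blast
next
  assume B: "B = Units R \<union> jacobson R \<and> sublocalizable R"
  moreover have "(Units R \<union> jacobson R) - Units R = jacobson R"
    using jacobson_disjoint_Units[OF nt] by blast
  ultimately show "subring B R \<and> Units R \<subseteq> B \<and> ideal (B - Units R) R"
    using sublocalizable_imp_subring jacobson_ideal by auto
qed

lemma local_subring_maximalideal_jacobson_iff:
  assumes nt: "\<one> \<noteq> \<zero>"
  shows "subring B R \<and> local_ring (R\<lparr>carrier := B\<rparr>)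
      \<and> maximalideal (jacobson R) (R\<lparr>carrier := B\<rparr>) \<and> Units (R\<lparr>carrier := B\<rparr>) = Units R
    \<longleftrightarrow> B = Units R \<union> jacobson R \<and> sublocalizable R"
proof
  assume "subring B R \<and> local_ring (R\<lparr>carrier := B\<rparr>)
      \<and> maximalideal (jacobson R) (R\<lparr>carrier := B\<rparr>) \<and> Units (R\<lparr>carrier := B\<rparr>) = Units R"
  then have B: "subring B R" "local_ring (R\<lparr>carrier := B\<rparr>)" "Units (R\<lparr>carrier := B\<rparr>) = Units R"
    and J: "maximalideal (jacobson R) (R\<lparr>carrier := B\<rparr>)" by auto
  have "B = Units R \<union> jacobson R" using local_subring_same_Units(1,2)[OF B] J by blast
  then show "B = Units R \<union> jacobson R \<and> sublocalizable R"
    using B(1) sublocalizable_iff_subring[OF nt] by simp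
qed (use sublocalizable_imp_subring sublocalizable_local_subring in simp)

lemma local_subring_maximalideal_ideal_iff:
  assumes nt: "\<one> \<noteq> \<zero>"
  shows "subring B R \<and> local_ring (R\<lparr>carrier := B\<rparr>)
      \<and> (\<exists>M. maximalideal M (R\<lparr>carrier := B\<rparr>) \<and> ideal M R) \<and> Units (R\<lparr>carrier := B\<rparr>) = Units R
    \<longleftrightarrow> B = Units R \<union> jacobson R \<and> sublocalizable R"
proof
  assume "subring B R \<and> local_ring (R\<lparr>carrier := B\<rparr>)
      \<and> (\<exists>M. maximalideal M (R\<lparr>carrier := B\<rparr>) \<and> ideal M R) \<and> Units (R\<lparr>carrier := B\<rparr>) = Units R"
  then obtain M where B: "subring B R" "local_ring (R\<lparr>carrier := B\<rparr>)" "Units (R\<lparr>carrier := B\<rparr>) = Units R"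
    and M: "maximalideal M (R\<lparr>carrier := B\<rparr>)" "ideal M R" by auto
  have "M = B - Units R" using local_subring_same_Units(2)[OF B] M(1) by blast
  then show "B = Units R \<union> jacobson R \<and> sublocalizable R"
    using subring_nonunits_ideal_iff[OF nt, of B] B(1) local_subring_same_Units(1)[OF B] M(2) by blast
next
  assume "B = Units R \<union> jacobson R \<and> sublocalizable R"
  then show "subring B R \<and> local_ring (R\<lparr>carrier := B\<rparr>)
      \<and> (\<exists>M. maximalideal M (R\<lparr>carrier := B\<rparr>) \<and> ideal M R) \<and> Units (R\<lparr>carrier := B\<rparr>) = Units R"
    using sublocalizable_imp_subring sublocalizable_local_subring jacobson_ideal by auto
qed

lemma local_subring_jacobson_iff:
  assumes nt: "\<one> \<noteq> \<zero>"
  shows "subring B R \<and> local_ring (R\<lparr>carrier := B\<rparr>)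
      \<and> Units (R\<lparr>carrier := B\<rparr>) = Units R \<and> jacobson (R\<lparr>carrier := B\<rparr>) = jacobson R
    \<longleftrightarrow> B = Units R \<union> jacobson R \<and> sublocalizable R"
proof
  assume "subring B R \<and> local_ring (R\<lparr>carrier := B\<rparr>)
      \<and> Units (R\<lparr>carrier := B\<rparr>) = Units R \<and> jacobson (R\<lparr>carrier := B\<rparr>) = jacobson R"
  then have B: "subring B R" "local_ring (R\<lparr>carrier := B\<rparr>)" "Units (R\<lparr>carrier := B\<rparr>) = Units R"
    and J: "jacobson (R\<lparr>carrier := B\<rparr>) = jacobson R" by auto
  have "B = Units R \<union> jacobson R" using local_subring_same_Units(1,3)[OF B] J by blast
  then show "B = Units R \<union> jacobson R \<and> sublocalizable R"
    using B(1) sublocalizable_iff_subring[OF nt] by simp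
qed (use sublocalizable_imp_subring sublocalizable_local_subring in simp)

lemma quotient_carrier: "carrier (R Quot I) = (+>) I ` carrier R"
  unfolding FactRing_def A_RCOSETS_def' by auto

lemma rcos_eq_zero_iff:
  assumes I: "ideal I R" and x: "x \<in> carrier R"
  shows "I +> x = \<zero>\<^bsub>R Quot I\<^esub> \<longleftrightarrow> x \<in> I"
proof -
  interpret ideal I R by fact
  show ?thesis unfolding FactRing_def using a_rcos_self[OF x] a_rcos_const by auto
qed

context
  fixes I assumes I: "ideal I R" and IJ: "I \<subseteq> jacobson R"
begin

lemma rcos_Units_iff:
  assumes x: "x \<in> carrier R"
  shows "I +> x \<in> Units (R Quot I) \<longleftrightarrow> x \<in> Units R"
proof -
  interpret H: ring_hom_ring R "R Quot I" "(+>) I" using ideal.rcos_ring_hom_ring[OF I] .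
  interpret Q: cring "R Quot I" using ideal.quotient_is_cring[OF I is_cring] .
  show ?thesis
  proof
    assume "I +> x \<in> Units (R Quot I)"
    then obtain c where c: "c \<in> carrier (R Quot I)" "(I +> x) \<otimes>\<^bsub>R Quot I\<^esub> c = \<one>\<^bsub>R Quot I\<^esub>"
      unfolding Units_def by blast
    then obtain y where y: "y \<in> carrier R" "c = I +> y" unfolding quotient_carrier by blast
    have "I +> (x \<otimes> y) = I +> \<one>" using c y x H.hom_mult H.hom_one by simp
    then have "x \<otimes> y \<ominus> \<one> \<in> jacobson R"
      using quotient_eq_iff_same_a_r_cos[OF I] x y IJ by auto
    then have "\<one> \<oplus> \<one> \<otimes> (x \<otimes> y \<ominus> \<one>) \<in> Units R" using jacobson_iff by blast
    moreover have "\<one> \<oplus> \<one> \<otimes> (x \<otimes> y \<ominus> \<one>) = x \<otimes> y" using x y by algebra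
    ultimately show "x \<in> Units R" using unit_factor x y by metis
  next
    assume u: "x \<in> Units R"
    have "(I +> x) \<otimes>\<^bsub>R Quot I\<^esub> (I +> inv x) = I +> (x \<otimes> inv x)"
      using H.hom_mult[OF Units_closed[OF u] Units_inv_closed[OF u]] by (rule sym)
    also have "\<dots> = \<one>\<^bsub>R Quot I\<^esub>" using Units_r_inv[OF u] by simp
    finally have "(I +> x) \<otimes>\<^bsub>R Quot I\<^esub> (I +> inv x) = \<one>\<^bsub>R Quot I\<^esub>" .
    then show "I +> x \<in> Units (R Quot I)"
      using Q.unit_factor[of "I +> x" "I +> inv x"] H.hom_closed[OF Units_closed[OF u]] u by simp
  qed
qed

lemma quotient_Units: "Units (R Quot I) = (+>) I ` Units R"
proof
  show "Units (R Quot I) \<subseteq> (+>) I ` Units R"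
  proof
    fix a assume a: "a \<in> Units (R Quot I)"
    then have "a \<in> carrier (R Quot I)" unfolding Units_def by blast
    then obtain x where "x \<in> carrier R" "a = I +> x" unfolding quotient_carrier by blast
    then show "a \<in> (+>) I ` Units R" using rcos_Units_iff a by blast
  qed
  show "(+>) I ` Units R \<subseteq> Units (R Quot I)"
    using rcos_Units_iff[OF Units_closed] by blast
qed

lemma rcos_jacobson_iff:
  assumes x: "x \<in> carrier R"
  shows "I +> x \<in> jacobson (R Quot I) \<longleftrightarrow> x \<in> jacobson R"
proof -
  interpret H: ring_hom_ring R "R Quot I" "(+>) I" using ideal.rcos_ring_hom_ring[OF I] .
  interpret Q: cring "R Quot I" using ideal.quotient_is_cring[OF I is_cring] .
  have "I +> x \<in> jacobson (R Quot I) \<longleftrightarrow>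
      (\<forall>c\<in>carrier (R Quot I). \<one>\<^bsub>R Quot I\<^esub> \<oplus>\<^bsub>R Quot I\<^esub> c \<otimes>\<^bsub>R Quot I\<^esub> (I +> x) \<in> Units (R Quot I))"
    using Q.jacobson_iff H.hom_closed[OF x] by blast
  also have "\<dots> \<longleftrightarrow> (\<forall>r\<in>carrier R. I +> (\<one> \<oplus> r \<otimes> x) \<in> Units (R Quot I))"
    unfolding quotient_carrier using x by simp
  also have "\<dots> \<longleftrightarrow> (\<forall>r\<in>carrier R. \<one> \<oplus> r \<otimes> x \<in> Units R)"
    by (rule ball_cong[OF refl], rule rcos_Units_iff) (use x in simp)
  also have "\<dots> \<longleftrightarrow> x \<in> jacobson R" using jacobson_iff x by blast
  finally show ?thesis .
qed

lemma quotient_nontrivial_iff: "\<one>\<^bsub>R Quot I\<^esub> \<noteq> \<zero>\<^bsub>R Quot I\<^esub> \<longleftrightarrow> \<one> \<noteq> \<zero>"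
proof -
  have "\<one>\<^bsub>R Quot I\<^esub> = \<zero>\<^bsub>R Quot I\<^esub> \<longleftrightarrow> \<one> \<in> I"
    using rcos_eq_zero_iff[OF I one_closed] by (simp add: FactRing_def)
  also have "\<dots> \<longleftrightarrow> \<one> = \<zero>"
    using IJ jacobson_disjoint_Units additive_subgroup.zero_closed[OF ideal.axioms(1)[OF I]] by auto
  finally show ?thesis by blast
qed

lemma quotient_Units_add_all_iff:
  "(\<forall>a\<in>Units (R Quot I). \<forall>b\<in>Units (R Quot I). P (a \<oplus>\<^bsub>R Quot I\<^esub> b))
    \<longleftrightarrow> (\<forall>u\<in>Units R. \<forall>v\<in>Units R. P (I +> (u \<oplus> v)))"
proof -
  interpret H: ring_hom_ring R "R Quot I" "(+>) I" using ideal.rcos_ring_hom_ring[OF I] .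
  show ?thesis unfolding quotient_Units by (simp add: Units_closed)
qed

lemma sublocalizable_quotient_iff: "sublocalizable (R Quot I) \<longleftrightarrow> sublocalizable R"
proof -
  have "sublocalizable (R Quot I) \<longleftrightarrow> \<one> \<noteq> \<zero> \<and>
      (\<forall>u\<in>Units R. \<forall>v\<in>Units R. I +> (u \<oplus> v) \<in> Units (R Quot I) \<union> jacobson (R Quot I))"
    unfolding sublocalizable_def quotient_nontrivial_iff
      quotient_Units_add_all_iff[where P = "\<lambda>a. a \<in> Units (R Quot I) \<union> jacobson (R Quot I)"] ..
  also have "\<dots> \<longleftrightarrow> sublocalizable R"
  proof -
    have "I +> z \<in> Units (R Quot I) \<union> jacobson (R Quot I) \<longleftrightarrow> z \<in> Units R \<union> jacobson R"
      if "z \<in> carrier R" for z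
      using rcos_Units_iff[OF that] rcos_jacobson_iff[OF that] by blast
    then show ?thesis unfolding sublocalizable_def by (simp add: Units_closed)
  qed
  finally show ?thesis .
qed

end

lemma quotient_jacobson_nilpotent_iff:
  assumes x: "x \<in> carrier R"
  shows "(\<exists>n::nat. (jacobson R +> x) [^]\<^bsub>R Quot jacobson R\<^esub> n = \<zero>\<^bsub>R Quot jacobson R\<^esub>)
    \<longleftrightarrow> x \<in> jacobson R"
proof -
  interpret H: ring_hom_ring R "R Quot jacobson R" "(+>) (jacobson R)"
    using ideal.rcos_ring_hom_ring[OF jacobson_ideal] .
  have "(jacobson R +> x) [^]\<^bsub>R Quot jacobson R\<^esub> n = \<zero>\<^bsub>R Quot jacobson R\<^esub>
      \<longleftrightarrow> x [^] n \<in> jacobson R" for n :: nat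
    using rcos_eq_zero_iff[OF jacobson_ideal nat_pow_closed[OF x]] H.hom_nat_pow[OF x] by simp
  moreover have "x [^] (1::nat) \<in> jacobson R \<longleftrightarrow> x \<in> jacobson R" using x by simp
  ultimately show ?thesis using nat_pow_mem_jacobson_imp_mem[OF x] by blast
qed

lemma unit_additive_quotient_jacobson_iff:
  assumes nt: "\<one> \<noteq> \<zero>"
  shows "unit_additive (R Quot jacobson R) \<longleftrightarrow> sublocalizable R"
proof -
  note J = jacobson_ideal subset_refl[of "jacobson R"]
  have "unit_additive (R Quot jacobson R) \<longleftrightarrow>
      (\<forall>u\<in>Units R. \<forall>v\<in>Units R. jacobson R +> (u \<oplus> v) \<in> Units (R Quot jacobson R) \<or>
        (\<exists>n::nat. (jacobson R +> (u \<oplus> v)) [^]\<^bsub>R Quot jacobson R\<^esub> n = \<zero>\<^bsub>R Quot jacobson R\<^esub>))"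
    unfolding unit_additive_def quotient_Units_add_all_iff[OF J, where P = "\<lambda>a. a \<in> Units (R Quot jacobson R) \<or>
      (\<exists>n::nat. a [^]\<^bsub>R Quot jacobson R\<^esub> n = \<zero>\<^bsub>R Quot jacobson R\<^esub>)"] ..
  also have "\<dots> \<longleftrightarrow> sublocalizable R"
    unfolding sublocalizable_def
    by (simp add: nt rcos_Units_iff[OF J] quotient_jacobson_nilpotent_iff Units_closed)
  finally show ?thesis .
qed

end

theorem proposition9p10:
  fixes R :: "('a, 'b) ring_scheme"
  assumes "cring R" and "\<one>\<^bsub>R\<^esub> \<noteq> \<zero>\<^bsub>R\<^esub>"
  shows
    \<comment> \<open>(b) \<longleftrightarrow> (a)\<close>
    "((\<forall>u \<in> Units R. \<one>\<^bsub>R\<^esub> \<oplus>\<^bsub>R\<^esub> u \<in> Units R \<union> jacobson R) \<longleftrightarrow> sublocalizable R)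
   \<comment> \<open>(c) \<longleftrightarrow> (a)\<close>
   \<and> (subring (Units R \<union> jacobson R) R \<longleftrightarrow> sublocalizable R)
   \<comment> \<open>(d) \<longleftrightarrow> (a)\<close>
   \<and> ((\<exists>I. ideal I R \<and> I \<noteq> carrier R \<and> subring (Units R \<union> I) R) \<longleftrightarrow> sublocalizable R)
   \<comment> \<open>(e) \<longleftrightarrow> (a)\<close>
   \<and> ((\<forall>I. (ideal I R \<and> I \<noteq> carrier R \<and> subring (Units R \<union> I) R) \<longleftrightarrow> I = jacobson R)
        \<longleftrightarrow> sublocalizable R)
   \<comment> \<open>(f) \<longleftrightarrow> (a)\<close>
   \<and> ((\<exists>B. subring B R \<and> Units R \<subseteq> B \<and> ideal (B - Units R) R) \<longleftrightarrow> sublocalizable R)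
   \<comment> \<open>(f), uniqueness: B = A^x \<union> J(A) and B - A^x = J(A)\<close>
   \<and> (\<forall>B. subring B R \<and> Units R \<subseteq> B \<and> ideal (B - Units R) R \<longrightarrow>
          B = Units R \<union> jacobson R \<and> B - Units R = jacobson R)
   \<comment> \<open>(g) \<longleftrightarrow> (a)\<close>
   \<and> ((subring (Units R \<union> jacobson R) R
        \<and> local_ring (R\<lparr>carrier := Units R \<union> jacobson R\<rparr>)
        \<and> maximalideal (jacobson R) (R\<lparr>carrier := Units R \<union> jacobson R\<rparr>)
        \<and> Units (R\<lparr>carrier := Units R \<union> jacobson R\<rparr>) = Units R)
       \<longleftrightarrow> sublocalizable R)
   \<comment> \<open>(h) \<longleftrightarrow> (a)\<close>
   \<and> ((\<exists>B. subring B R \<and> local_ring (R\<lparr>carrier := B\<rparr>)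
          \<and> maximalideal (jacobson R) (R\<lparr>carrier := B\<rparr>)
          \<and> Units (R\<lparr>carrier := B\<rparr>) = Units R) \<longleftrightarrow> sublocalizable R)
   \<comment> \<open>(h), uniqueness\<close>
   \<and> (\<forall>B1 B2. (subring B1 R \<and> local_ring (R\<lparr>carrier := B1\<rparr>)
          \<and> maximalideal (jacobson R) (R\<lparr>carrier := B1\<rparr>)
          \<and> Units (R\<lparr>carrier := B1\<rparr>) = Units R)
        \<and> (subring B2 R \<and> local_ring (R\<lparr>carrier := B2\<rparr>)
          \<and> maximalideal (jacobson R) (R\<lparr>carrier := B2\<rparr>)
          \<and> Units (R\<lparr>carrier := B2\<rparr>) = Units R) \<longrightarrow> B1 = B2)
   \<comment> \<open>(i) \<longleftrightarrow> (a)\<close>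
   \<and> ((\<exists>B. subring B R \<and> local_ring (R\<lparr>carrier := B\<rparr>)
          \<and> (\<exists>M. maximalideal M (R\<lparr>carrier := B\<rparr>) \<and> ideal M R)
          \<and> Units (R\<lparr>carrier := B\<rparr>) = Units R) \<longleftrightarrow> sublocalizable R)
   \<comment> \<open>(i), uniqueness\<close>
   \<and> (\<forall>B1 B2. (subring B1 R \<and> local_ring (R\<lparr>carrier := B1\<rparr>)
          \<and> (\<exists>M. maximalideal M (R\<lparr>carrier := B1\<rparr>) \<and> ideal M R)
          \<and> Units (R\<lparr>carrier := B1\<rparr>) = Units R)
        \<and> (subring B2 R \<and> local_ring (R\<lparr>carrier := B2\<rparr>)
          \<and> (\<exists>M. maximalideal M (R\<lparr>carrier := B2\<rparr>) \<and> ideal M R)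
          \<and> Units (R\<lparr>carrier := B2\<rparr>) = Units R) \<longrightarrow> B1 = B2)
   \<comment> \<open>(j) \<longleftrightarrow> (a)\<close>
   \<and> ((\<exists>B. subring B R \<and> local_ring (R\<lparr>carrier := B\<rparr>)
          \<and> Units (R\<lparr>carrier := B\<rparr>) = Units R
          \<and> jacobson (R\<lparr>carrier := B\<rparr>) = jacobson R) \<longleftrightarrow> sublocalizable R)
   \<comment> \<open>(j), uniqueness\<close>
   \<and> (\<forall>B1 B2. (subring B1 R \<and> local_ring (R\<lparr>carrier := B1\<rparr>)
          \<and> Units (R\<lparr>carrier := B1\<rparr>) = Units R
          \<and> jacobson (R\<lparr>carrier := B1\<rparr>) = jacobson R)
        \<and> (subring B2 R \<and> local_ring (R\<lparr>carrier := B2\<rparr>)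
          \<and> Units (R\<lparr>carrier := B2\<rparr>) = Units R
          \<and> jacobson (R\<lparr>carrier := B2\<rparr>) = jacobson R) \<longrightarrow> B1 = B2)
   \<comment> \<open>(k) \<longleftrightarrow> (a)\<close>
   \<and> (sublocalizable (R Quot jacobson R) \<longleftrightarrow> sublocalizable R)
   \<comment> \<open>(l) \<longleftrightarrow> (a)\<close>
   \<and> (unit_additive (R Quot jacobson R) \<longleftrightarrow> sublocalizable R)"
proof -
  interpret cring R by fact
  have "(Units R \<union> jacobson R) - Units R = jacobson R"
    using jacobson_disjoint_Units[OF assms(2)] by blast
  then show ?thesis
    using sublocalizable_iff_one_add_Units[OF assms(2)] sublocalizable_local_subring
    by (auto simp add: assms(2) sublocalizable_iff_subring
        proper_ideal_Units_union_subring_iff subring_nonunits_ideal_iff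
        local_subring_maximalideal_jacobson_iff local_subring_maximalideal_ideal_iff
        local_subring_jacobson_iff sublocalizable_quotient_iff[OF jacobson_ideal subset_refl]
        unit_additive_quotient_jacobson_iff)
qed

end
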